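(* Let $n\ge1$, $m\ge1$, and let $I_m\subset S_m$ be a nonzero subspace spanned by an initial segment of degree-$m$ monomials with respect to the degree reverse lexicographic order (with $x_0\succ x_1\succ\cdots\succ x_n$). (1) For any $l>0$, $S_lI_m$ is spanned by an initial reverse lexicographic segment of degree-$(m+l)$ monomials if and only if $\dim_kI_m\ge\binom{n+m-1}{m}$, if and only if $x_{n-1}^m\in I_m$. (2) Suppose $x_{n-1}^m\in I_m$. Then for every $l\ge0$, $\dim_kS_m-\dim_kI_m=\dim_kS_{m+l}-\dim_kS_lI_m$. In particular, if $J\subset S$ is a homogeneous ideal generated in degrees $\le m$ with $J_m=I_m$, then the Hilbert polynomial of $S/J$ is constant.
   Context: $S=k[x_0,\dots,x_n]=\bigoplus_m S_m$ over an algebraically closed field $k$ of characteristic zero; $S_lI_m$ denotes the span of products $fg$, $f\in S_l$, $g\in I_m$. The degree reverse lexicographic order with $x_0\succ\cdots\succ x_n$: for monomials of the same degree, $x^\alpha\succ x^\beta$ iff the last nonzero entry of $\alpha-\beta$ is negative. An initial segment of degree $t$ is the set of the first $\ell$ monomials of degree $t$ in this order, for some $\ell$. *)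

theory Defs
  imports Complex_Main "HOL-Library.Poly_Mapping" "HOL-Computational_Algebra.Polynomial"
begin

text \<open>Polynomials in the variables x_0, x_1, ... over a field k: finitely supported
  maps from exponent vectors to coefficients. The ring
  S = k[x_0..x_n] is the subset of those involving only x_0..x_n.\<close>

type_synonym 'a mpoly = "(nat \<Rightarrow>\<^sub>0 nat) \<Rightarrow>\<^sub>0 'a"

definition smult_mp :: "'a::field \<Rightarrow> 'a mpoly \<Rightarrow> 'a mpoly" where
  "smult_mp c p = Poly_Mapping.map (\<lambda>x. c * x) p"

abbreviation kspan :: "'a::field mpoly set \<Rightarrow> 'a mpoly set" where
  "kspan \<equiv> module.span smult_mp"

abbreviation kdim :: "'a::field mpoly set \<Rightarrow> nat" where
  "kdim \<equiv> vector_space.dim smult_mp"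

definition xmon :: "(nat \<Rightarrow>\<^sub>0 nat) \<Rightarrow> 'a::field mpoly" where
  "xmon \<alpha> = Poly_Mapping.single \<alpha> 1"

definition deg_monos :: "nat \<Rightarrow> nat \<Rightarrow> (nat \<Rightarrow>\<^sub>0 nat) set" where
  "deg_monos n t = {\<alpha>. Poly_Mapping.keys \<alpha> \<subseteq> {0..n} \<and> (\<Sum>i\<le>n. Poly_Mapping.lookup \<alpha> i) = t}"

definition ringS :: "nat \<Rightarrow> 'a::field mpoly set" where
  "ringS n = kspan (xmon ` {\<alpha>. Poly_Mapping.keys \<alpha> \<subseteq> {0..n}})"

definition homog :: "nat \<Rightarrow> nat \<Rightarrow> 'a::field mpoly set" where
  "homog n t = kspan (xmon ` deg_monos n t)"

text \<open>Degree reverse lexicographic order on monomials of the same degree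
  (x_0 > x_1 > ... > x_n): alpha > beta iff the last nonzero entry of
  alpha - beta is negative.\<close>
definition revlex_gt :: "nat \<Rightarrow> (nat \<Rightarrow>\<^sub>0 nat) \<Rightarrow> (nat \<Rightarrow>\<^sub>0 nat) \<Rightarrow> bool" where
  "revlex_gt n \<alpha> \<beta> \<longleftrightarrow>
     (\<exists>j\<le>n. Poly_Mapping.lookup \<alpha> j < Poly_Mapping.lookup \<beta> j \<and> (\<forall>i. j < i \<and> i \<le> n \<longrightarrow> Poly_Mapping.lookup \<alpha> i = Poly_Mapping.lookup \<beta> i))"

text \<open>Initial segment of degree t: the first l monomials of degree t, i.e. those
  having fewer than l monomials of degree t above them.\<close>
definition rl_initial_segment :: "nat \<Rightarrow> nat \<Rightarrow> (nat \<Rightarrow>\<^sub>0 nat) set \<Rightarrow> bool" where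
  "rl_initial_segment n t M \<longleftrightarrow>
     (\<exists>l::nat. M = {\<alpha> \<in> deg_monos n t. card {\<beta> \<in> deg_monos n t. revlex_gt n \<beta> \<alpha>} < l})"

definition prodspace :: "'a::field mpoly set \<Rightarrow> 'a mpoly set \<Rightarrow> 'a mpoly set" where
  "prodspace A B = kspan {f * g | f g. f \<in> A \<and> g \<in> B}"

definition is_ideal :: "nat \<Rightarrow> 'a::field mpoly set \<Rightarrow> bool" where
  "is_ideal n J \<longleftrightarrow> J \<subseteq> ringS n \<and> 0 \<in> J \<and> (\<forall>f\<in>J. \<forall>g\<in>J. f + g \<in> J)
      \<and> (\<forall>s\<in>ringS n. \<forall>f\<in>J. s * f \<in> J)"

definition mdeg :: "(nat \<Rightarrow>\<^sub>0 nat) \<Rightarrow> nat" where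
  "mdeg \<alpha> = (\<Sum>i\<in>Poly_Mapping.keys \<alpha>. Poly_Mapping.lookup \<alpha> i)"

definition hcomp :: "nat \<Rightarrow> 'a::field mpoly \<Rightarrow> 'a mpoly" where
  "hcomp t f = (\<Sum>\<alpha>\<in>{\<alpha> \<in> Poly_Mapping.keys f. mdeg \<alpha> = t}. Poly_Mapping.single \<alpha> (Poly_Mapping.lookup f \<alpha>))"

definition homogeneous_ideal :: "nat \<Rightarrow> 'a::field mpoly set \<Rightarrow> bool" where
  "homogeneous_ideal n J \<longleftrightarrow> is_ideal n J \<and> (\<forall>f\<in>J. \<forall>t. hcomp t f \<in> J)"

definition ideal_gen :: "nat \<Rightarrow> 'a::field mpoly set \<Rightarrow> 'a mpoly set" where
  "ideal_gen n G = \<Inter>{K. is_ideal n K \<and> G \<subseteq> K}"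

definition generated_in_degrees_le :: "nat \<Rightarrow> nat \<Rightarrow> 'a::field mpoly set \<Rightarrow> bool" where
  "generated_in_degrees_le n m J \<longleftrightarrow> J = ideal_gen n (\<Union>d\<le>m. J \<inter> homog n d)"

definition hilbert_fn :: "nat \<Rightarrow> 'a::field mpoly set \<Rightarrow> nat \<Rightarrow> int" where
  "hilbert_fn n J t = int (kdim (homog n t :: 'a mpoly set)) - int (kdim (J \<inter> homog n t))"

end

theory Submission
  imports Defs "HOL-Library.Set_Algebras"
begin

text \<open>All spaces involved are spanned by monomials, so everything reduces to sets of exponent
  vectors. In the revlex order the exponent of the last variable \<open>x\<^sub>n\<close> is compared first;
  hence the monomials of degree \<open>m\<close> that are at least \<open>x\<^sub>n\<^sub>-\<^sub>1\<^sup>m\<close> are exactly the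
  \<open>(n + m - 1) choose m\<close> monomials free of \<open>x\<^sub>n\<close>. So \<open>x\<^sub>n\<^sub>-\<^sub>1\<^sup>m \<in> I\<^sub>m\<close> iff \<open>I\<^sub>m\<close>
  contains all of them iff \<open>dim I\<^sub>m \<ge> (n + m - 1) choose m\<close>. In that case a monomial of
  degree \<open>m + l\<close> lies outside \<open>S\<^sub>l I\<^sub>m\<close> iff it is \<open>x\<^sub>n\<^sup>l\<close> times a monomial outside \<open>I\<^sub>m\<close>;
  as multiplication by \<open>x\<^sub>n\<^sup>l\<close> preserves the order, \<open>S\<^sub>l I\<^sub>m\<close> is again a segment of the
  same codimension. Otherwise \<open>x\<^sub>n\<^sub>-\<^sub>1\<^sup>m\<^sup>+\<^sup>l \<notin> S\<^sub>l I\<^sub>m\<close> although it precedes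
  \<open>x\<^sub>n\<^sup>l\<close> times any element of \<open>I\<^sub>m\<close>. Finally, an ideal \<open>J\<close> generated in degrees
  \<open>\<le> m\<close> with \<open>J\<^sub>m\<close> spanned by monomials satisfies \<open>J\<^sub>t = S\<^sub>t\<^sub>-\<^sub>m J\<^sub>m\<close> for \<open>t \<ge> m\<close>,
  so its Hilbert function is constant from degree \<open>m\<close> on.\<close>

section \<open>Monomial subspaces\<close>

lemma lookup_smult_mp [simp]:
  "Poly_Mapping.lookup (smult_mp c p) k = c * Poly_Mapping.lookup p k"
  unfolding smult_mp_def by transfer (simp add: when_def)

lemma smult_mp_eq_mult: "smult_mp c p = Poly_Mapping.single 0 c * p"
  by (simp add: smult_mp_def mult_map_scale_conv_mult)

interpretation mp: vector_space "smult_mp :: 'a::field \<Rightarrow> 'a mpoly \<Rightarrow> 'a mpoly"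
  by unfold_locales (simp_all add: poly_mapping_eq_iff fun_eq_iff algebra_simps lookup_add)

abbreviation monomial_space :: "(nat \<Rightarrow>\<^sub>0 nat) set \<Rightarrow> 'a::field mpoly set" where
  "monomial_space X \<equiv> {p. Poly_Mapping.keys p \<subseteq> X}"

lemma lookup_xmon: "Poly_Mapping.lookup (xmon \<alpha> :: 'a::field mpoly) \<beta> = (if \<alpha> = \<beta> then 1 else 0)"
  by (simp add: xmon_def lookup_single when_def)

lemma keys_xmon [simp]: "Poly_Mapping.keys (xmon \<alpha> :: 'a::field mpoly) = {\<alpha>}"
  by (simp add: xmon_def)

lemma inj_xmon: "inj (xmon :: _ \<Rightarrow> 'a::field mpoly)"
  by (rule injI) (metis keys_xmon singleton_inject)

lemma xmon_mult: "(xmon \<alpha> :: 'a::field mpoly) * xmon \<beta> = xmon (\<alpha> + \<beta>)"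
  by (simp add: xmon_def mult_single)

lemma mpoly_eq_sum_xmon:
  "(p :: 'a::field mpoly) = (\<Sum>\<alpha>\<in>Poly_Mapping.keys p. smult_mp (Poly_Mapping.lookup p \<alpha>) (xmon \<alpha>))"
  (is "p = ?sum")
proof (rule poly_mapping_eqI)
  fix \<beta>
  have "Poly_Mapping.lookup ?sum \<beta>
      = (\<Sum>\<alpha>\<in>Poly_Mapping.keys p. if \<alpha> = \<beta> then Poly_Mapping.lookup p \<alpha> else 0)"
    by (simp add: lookup_sum lookup_xmon if_distrib cong: if_cong)
  also have "\<dots> = Poly_Mapping.lookup p \<beta>"
    by (simp add: in_keys_iff)
  finally show "Poly_Mapping.lookup p \<beta> = Poly_Mapping.lookup ?sum \<beta>"
    by simp
qed

lemma subspace_monomial_space: "mp.subspace (monomial_space X :: 'a::field mpoly set)"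
  unfolding mp.subspace_def by (auto simp: in_keys_iff dest: keys_add[THEN subsetD])

lemma span_xmon: "kspan (xmon ` X) = (monomial_space X :: 'a::field mpoly set)"
proof
  show "kspan (xmon ` X) \<subseteq> (monomial_space X :: 'a mpoly set)"
    by (rule mp.span_minimal) (auto simp: subspace_monomial_space)
  show "monomial_space X \<subseteq> (kspan (xmon ` X) :: 'a mpoly set)"
  proof
    fix p :: "'a mpoly" assume "p \<in> monomial_space X"
    then have "(\<Sum>\<alpha>\<in>Poly_Mapping.keys p. smult_mp (Poly_Mapping.lookup p \<alpha>) (xmon \<alpha>)) \<in> kspan (xmon ` X)"
      by (intro mp.span_sum mp.span_scale mp.span_base) auto
    then show "p \<in> kspan (xmon ` X)"
      using mpoly_eq_sum_xmon[of p] by simp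
  qed
qed

lemma independent_xmon: "mp.independent (xmon ` X :: 'a::field mpoly set)"
  unfolding mp.independent_explicit_module
proof (intro allI impI)
  fix T u v
  assume T: "finite T" "T \<subseteq> (xmon ` X :: 'a mpoly set)" and sum0: "(\<Sum>w\<in>T. smult_mp (u w) w) = 0"
    and v: "v \<in> T"
  then obtain \<alpha> where v_eq: "v = xmon \<alpha>" by auto
  have "0 = Poly_Mapping.lookup (\<Sum>w\<in>T. smult_mp (u w) w) \<alpha>"
    using sum0 by simp
  also have "\<dots> = (\<Sum>w\<in>T. if w = v then u w else 0)"
    unfolding lookup_sum lookup_smult_mp
  proof (rule sum.cong)
    fix w assume "w \<in> T"
    then obtain \<beta> where "w = xmon \<beta>" using T by auto
    then show "u w * Poly_Mapping.lookup w \<alpha> = (if w = v then u w else 0)"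
      using inj_xmon[where 'a='a] by (auto simp: v_eq lookup_xmon dest: injD)
  qed simp
  also have "\<dots> = u v"
    using T v by simp
  finally show "u v = 0" by simp
qed

lemma dim_monomial_space: "finite X \<Longrightarrow> kdim (monomial_space X :: 'a::field mpoly set) = card X"
  using mp.dim_span_eq_card_independent[OF independent_xmon, of X]
  by (simp add: span_xmon card_image inj_on_subset[OF inj_xmon])

lemma monomial_space_eq_iff:
  "(monomial_space A :: 'a::field mpoly set) = monomial_space B \<longleftrightarrow> A = B"
proof
  assume eq: "(monomial_space A :: 'a mpoly set) = monomial_space B"
  have "\<alpha> \<in> A \<longleftrightarrow> xmon \<alpha> \<in> (monomial_space A :: 'a mpoly set)"
    and "\<alpha> \<in> B \<longleftrightarrow> xmon \<alpha> \<in> (monomial_space B :: 'a mpoly set)" for \<alpha>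
    by simp_all
  then show "A = B" using eq by blast
qed simp

lemma prodspace_monomial_space:
  "prodspace (monomial_space A) (monomial_space B) = (monomial_space (A + B) :: 'a::field mpoly set)"
proof
  show "prodspace (monomial_space A) (monomial_space B) \<subseteq> (monomial_space (A + B) :: 'a mpoly set)"
    unfolding prodspace_def
    by (rule mp.span_minimal[OF _ subspace_monomial_space]) (fastforce dest: keys_mult[THEN subsetD])
  have "xmon ` (A + B) \<subseteq> {f * g |f g. f \<in> (monomial_space A :: 'a mpoly set) \<and> g \<in> monomial_space B}"
    by (auto elim!: set_plus_elim intro!: exI[of _ "xmon _"] simp: xmon_mult)
  then show "monomial_space (A + B) \<subseteq> (prodspace (monomial_space A) (monomial_space B) :: 'a mpoly set)"
    unfolding prodspace_def span_xmon[symmetric] by (rule mp.span_mono)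
qed

lemma homog_eq: "homog n t = (monomial_space (deg_monos n t) :: 'a::field mpoly set)"
  unfolding homog_def by (rule span_xmon)

lemma ringS_eq: "ringS n = (monomial_space {\<alpha>. Poly_Mapping.keys \<alpha> \<subseteq> {0..n}} :: 'a::field mpoly set)"
  unfolding ringS_def by (rule span_xmon)

section \<open>Degrees of exponent vectors\<close>

lemma keys_add_nat: "Poly_Mapping.keys (\<alpha> + \<beta> :: nat \<Rightarrow>\<^sub>0 nat) = Poly_Mapping.keys \<alpha> \<union> Poly_Mapping.keys \<beta>"
  by (auto simp: in_keys_iff lookup_add)

lemma mdeg_eq_sum:
  "finite S \<Longrightarrow> Poly_Mapping.keys \<alpha> \<subseteq> S \<Longrightarrow> mdeg \<alpha> = (\<Sum>i\<in>S. Poly_Mapping.lookup \<alpha> i)"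
  unfolding mdeg_def by (rule sum.mono_neutral_left) (auto simp: in_keys_iff)

lemma mdeg_add: "mdeg (\<alpha> + \<beta>) = mdeg \<alpha> + mdeg \<beta>"
proof -
  let ?S = "Poly_Mapping.keys \<alpha> \<union> Poly_Mapping.keys \<beta>"
  have "mdeg (\<alpha> + \<beta>) = (\<Sum>i\<in>?S. Poly_Mapping.lookup (\<alpha> + \<beta>) i)"
    by (rule mdeg_eq_sum) (auto simp: keys_add_nat)
  also have "\<dots> = (\<Sum>i\<in>?S. Poly_Mapping.lookup \<alpha> i) + (\<Sum>i\<in>?S. Poly_Mapping.lookup \<beta> i)"
    by (simp add: lookup_add sum.distrib)
  also have "\<dots> = mdeg \<alpha> + mdeg \<beta>"
    by (simp add: mdeg_eq_sum[symmetric])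
  finally show ?thesis .
qed

lemma mdeg_single [simp]: "mdeg (Poly_Mapping.single i k) = k"
  by (simp add: mdeg_def)

lemma mdeg_zero [simp]: "mdeg 0 = 0"
  by (simp add: mdeg_def)

lemma mdeg_eq_0_iff [simp]: "mdeg \<alpha> = 0 \<longleftrightarrow> \<alpha> = 0"
  by (auto simp: mdeg_def in_keys_iff intro!: poly_mapping_eqI)

lemma lookup_le_mdeg: "Poly_Mapping.lookup \<alpha> i \<le> mdeg \<alpha>"
  by (cases "i \<in> Poly_Mapping.keys \<alpha>") (auto simp: mdeg_def in_keys_iff intro: member_le_sum)

lemma add_single_minus:
  fixes \<alpha> :: "'a \<Rightarrow>\<^sub>0 nat"
  assumes "k \<le> Poly_Mapping.lookup \<alpha> i"
  shows "\<alpha> = (\<alpha> - Poly_Mapping.single i k) + Poly_Mapping.single i k"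
proof (rule poly_mapping_eqI)
  fix j
  show "Poly_Mapping.lookup \<alpha> j = Poly_Mapping.lookup (\<alpha> - Poly_Mapping.single i k + Poly_Mapping.single i k) j"
    using assms by (cases "i = j") (simp_all add: lookup_add lookup_minus lookup_single)
qed

lemma eq_single_if_lookup_eq_mdeg:
  assumes "Poly_Mapping.lookup \<alpha> i = mdeg \<alpha>"
  shows "\<alpha> = Poly_Mapping.single i (mdeg \<alpha>)"
proof -
  define \<rho> where "\<rho> = \<alpha> - Poly_Mapping.single i (mdeg \<alpha>)"
  have \<alpha>_eq: "\<alpha> = \<rho> + Poly_Mapping.single i (mdeg \<alpha>)"
    unfolding \<rho>_def using assms by (intro add_single_minus) simp
  then have "mdeg \<rho> = 0"
    by (metis add_right_cancel mdeg_add mdeg_single add_0)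
  then show ?thesis
    using \<alpha>_eq by simp
qed

lemma eq_single_if_keys_subset:
  "Poly_Mapping.keys \<alpha> \<subseteq> {i} \<Longrightarrow> \<alpha> = Poly_Mapping.single i (mdeg \<alpha>)"
  by (rule eq_single_if_lookup_eq_mdeg) (simp add: mdeg_eq_sum[of "{i}"])

lemma mdeg_split: "k \<le> mdeg \<mu> \<Longrightarrow> \<exists>\<mu>' \<rho>. \<mu> = \<mu>' + \<rho> \<and> mdeg \<mu>' = k"
proof (induction k)
  case 0
  show ?case by (intro exI[of _ 0] exI[of _ \<mu>]) simp
next
  case (Suc k)
  then obtain \<mu>' \<rho> where \<mu>_eq: "\<mu> = \<mu>' + \<rho>" and deg: "mdeg \<mu>' = k"
    by auto
  then have "\<rho> \<noteq> 0"
    using Suc.prems by (auto simp: mdeg_add)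
  then obtain i where "i \<in> Poly_Mapping.keys \<rho>"
    by (metis ex_in_conv keys_eq_empty)
  then have "\<rho> = (\<rho> - Poly_Mapping.single i 1) + Poly_Mapping.single i 1"
    by (intro add_single_minus) (simp add: in_keys_iff)
  then have "\<mu> = (\<mu>' + Poly_Mapping.single i 1) + (\<rho> - Poly_Mapping.single i 1)"
    using \<mu>_eq by (metis add.assoc add.commute)
  moreover have "mdeg (\<mu>' + Poly_Mapping.single i 1) = Suc k"
    using deg by (simp add: mdeg_add)
  ultimately show ?case
    by blast
qed

lemma deg_monos_iff: "\<alpha> \<in> deg_monos n t \<longleftrightarrow> Poly_Mapping.keys \<alpha> \<subseteq> {0..n} \<and> mdeg \<alpha> = t"
  unfolding deg_monos_def by (auto simp: atLeast0AtMost mdeg_eq_sum[of "{..n}"])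

lemma single_in_deg_monos [simp]: "i \<le> n \<Longrightarrow> Poly_Mapping.single i t \<in> deg_monos n t"
  by (simp add: deg_monos_iff)

lemma add_in_deg_monos:
  "\<alpha> \<in> deg_monos n s \<Longrightarrow> \<beta> \<in> deg_monos n t \<Longrightarrow> \<alpha> + \<beta> \<in> deg_monos n (s + t)"
  by (simp add: deg_monos_iff keys_add_nat mdeg_add)

lemma add_in_deg_monos_iff:
  "\<beta> \<in> deg_monos n t \<Longrightarrow> \<alpha> + \<beta> \<in> deg_monos n (s + t) \<longleftrightarrow> \<alpha> \<in> deg_monos n s"
  by (auto simp: deg_monos_iff keys_add_nat mdeg_add)

lemma set_plus_subset_deg_monos:
  "A \<subseteq> deg_monos n s \<Longrightarrow> B \<subseteq> deg_monos n t \<Longrightarrow> A + B \<subseteq> deg_monos n (s + t)"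
  by (auto elim!: set_plus_elim intro!: add_in_deg_monos)

lemma deg_monos_0: "deg_monos 0 t = {Poly_Mapping.single 0 t}"
  by (auto simp: deg_monos_iff intro: eq_single_if_keys_subset)

lemma deg_monos_Suc:
  "deg_monos (Suc k) t = (\<Union>e\<le>t. (\<lambda>\<beta>. \<beta> + Poly_Mapping.single (Suc k) e) ` deg_monos k (t - e))"
proof (intro set_eqI iffI)
  fix \<alpha> assume \<alpha>: "\<alpha> \<in> deg_monos (Suc k) t"
  define e where "e = Poly_Mapping.lookup \<alpha> (Suc k)"
  define \<beta> where "\<beta> = \<alpha> - Poly_Mapping.single (Suc k) e"
  have \<alpha>_eq: "\<alpha> = \<beta> + Poly_Mapping.single (Suc k) e"
    unfolding \<beta>_def e_def by (rule add_single_minus) simp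
  have "Poly_Mapping.keys \<beta> \<subseteq> Poly_Mapping.keys \<alpha> - {Suc k}"
    by (auto simp: \<beta>_def e_def in_keys_iff lookup_minus lookup_single when_def)
  then have "Poly_Mapping.keys \<beta> \<subseteq> {0..k}"
    using \<alpha> by (auto simp: deg_monos_iff le_Suc_eq subset_iff)
  moreover have "mdeg \<alpha> = mdeg \<beta> + e"
    by (subst \<alpha>_eq) (simp add: mdeg_add)
  ultimately have "e \<le> t" "\<beta> \<in> deg_monos k (t - e)"
    using \<alpha> by (auto simp: deg_monos_iff)
  then show "\<alpha> \<in> (\<Union>e\<le>t. (\<lambda>\<beta>. \<beta> + Poly_Mapping.single (Suc k) e) ` deg_monos k (t - e))"
    by (subst \<alpha>_eq) blast
next
  fix \<alpha> assume "\<alpha> \<in> (\<Union>e\<le>t. (\<lambda>\<beta>. \<beta> + Poly_Mapping.single (Suc k) e) ` deg_monos k (t - e))"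
  then obtain e \<beta> where "e \<le> t" "\<beta> \<in> deg_monos k (t - e)" "\<alpha> = \<beta> + Poly_Mapping.single (Suc k) e"
    by blast
  moreover from this have "Poly_Mapping.keys \<beta> \<subseteq> {0..Suc k}"
    by (auto simp: deg_monos_iff)
  ultimately show "\<alpha> \<in> deg_monos (Suc k) t"
    by (simp add: deg_monos_iff mdeg_add keys_add_nat)
qed

lemma finite_deg_monos [simp]: "finite (deg_monos n t)"
proof (induction n arbitrary: t)
  case 0
  show ?case by (simp add: deg_monos_0)
next
  case (Suc n)
  show ?case by (simp add: deg_monos_Suc Suc.IH)
qed

lemma card_deg_monos: "card (deg_monos n t) = (n + t) choose t"
proof (induction n arbitrary: t)
  case 0
  show ?case by (simp add: deg_monos_0)
next
  case (Suc n)
  let ?shift = "\<lambda>e \<beta>. \<beta> + Poly_Mapping.single (Suc n) e"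
  have lookup_shift: "Poly_Mapping.lookup (?shift e \<beta>) (Suc n) = e" if "\<beta> \<in> deg_monos n s" for e s \<beta>
    using that by (auto simp: deg_monos_iff in_keys_iff lookup_add)
  have disjoint: "?shift e ` deg_monos n (t - e) \<inter> ?shift e' ` deg_monos n (t - e') = {}"
    if "e \<noteq> e'" for e e'
  proof (rule ccontr)
    assume "?shift e ` deg_monos n (t - e) \<inter> ?shift e' ` deg_monos n (t - e') \<noteq> {}"
    then obtain \<beta> \<beta>' where "\<beta> \<in> deg_monos n (t - e)" "\<beta>' \<in> deg_monos n (t - e')" "?shift e \<beta> = ?shift e' \<beta>'"
      by blast
    then show False
      using that lookup_shift by metis
  qed
  have "card (deg_monos (Suc n) t) = (\<Sum>e\<le>t. card (?shift e ` deg_monos n (t - e)))"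
    unfolding deg_monos_Suc by (rule card_UN_disjoint) (simp_all add: disjoint)
  also have "\<dots> = (\<Sum>e\<le>t. (n + (t - e)) choose (t - e))"
    by (simp add: card_image Suc.IH inj_on_def)
  also have "\<dots> = (\<Sum>j\<le>t. (n + j) choose j)"
    using sum.atLeastAtMost_rev[of "\<lambda>j. (n + j) choose j" 0 t] by (simp add: atMost_atLeast0)
  also have "\<dots> = (Suc n + t) choose t"
    by (simp add: sum_choose_lower)
  finally show ?case .
qed

lemma deg_monos_pred:
  assumes "1 \<le> n"
  shows "deg_monos (n - 1) t = {\<alpha> \<in> deg_monos n t. Poly_Mapping.lookup \<alpha> n = 0}"
proof (intro set_eqI)
  fix \<alpha> :: "nat \<Rightarrow>\<^sub>0 nat"
  have "{0..n - 1} = {0..n} - {n}"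
    using assms by auto
  then have "Poly_Mapping.keys \<alpha> \<subseteq> {0..n - 1} \<longleftrightarrow> Poly_Mapping.keys \<alpha> \<subseteq> {0..n} \<and> n \<notin> Poly_Mapping.keys \<alpha>"
    by blast
  then show "\<alpha> \<in> deg_monos (n - 1) t \<longleftrightarrow> \<alpha> \<in> {\<alpha> \<in> deg_monos n t. Poly_Mapping.lookup \<alpha> n = 0}"
    by (simp add: deg_monos_iff in_keys_iff) blast
qed

section \<open>The reverse lexicographic order\<close>

lemma revlex_gt_irrefl: "\<not> revlex_gt n \<alpha> \<alpha>"
  by (simp add: revlex_gt_def)

lemma revlex_gt_asym: "revlex_gt n \<alpha> \<beta> \<Longrightarrow> \<not> revlex_gt n \<beta> \<alpha>"
  unfolding revlex_gt_def by (metis less_asym linorder_neqE_nat)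

lemma revlex_gt_trans:
  assumes "revlex_gt n \<alpha> \<beta>" "revlex_gt n \<beta> \<gamma>"
  shows "revlex_gt n \<alpha> \<gamma>"
proof -
  obtain j1 where j1: "j1 \<le> n" "Poly_Mapping.lookup \<alpha> j1 < Poly_Mapping.lookup \<beta> j1"
    "\<And>i. j1 < i \<Longrightarrow> i \<le> n \<Longrightarrow> Poly_Mapping.lookup \<alpha> i = Poly_Mapping.lookup \<beta> i"
    using assms(1) unfolding revlex_gt_def by blast
  obtain j2 where j2: "j2 \<le> n" "Poly_Mapping.lookup \<beta> j2 < Poly_Mapping.lookup \<gamma> j2"
    "\<And>i. j2 < i \<Longrightarrow> i \<le> n \<Longrightarrow> Poly_Mapping.lookup \<beta> i = Poly_Mapping.lookup \<gamma> i"
    using assms(2) unfolding revlex_gt_def by blast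
  show ?thesis
    unfolding revlex_gt_def
    by (rule exI[of _ "max j1 j2"], cases j1 j2 rule: linorder_cases) (use j1 j2 in \<open>auto simp: max_def\<close>)
qed

lemma revlex_gt_total:
  assumes "Poly_Mapping.keys \<alpha> \<subseteq> {0..n}" "Poly_Mapping.keys \<beta> \<subseteq> {0..n}" "\<alpha> \<noteq> \<beta>"
  shows "revlex_gt n \<alpha> \<beta> \<or> revlex_gt n \<beta> \<alpha>"
proof -
  let ?D = "{j. j \<le> n \<and> Poly_Mapping.lookup \<alpha> j \<noteq> Poly_Mapping.lookup \<beta> j}"
  have "?D \<noteq> {}"
  proof
    assume D_empty: "?D = {}"
    have "Poly_Mapping.lookup \<alpha> j = Poly_Mapping.lookup \<beta> j" for j
    proof (cases "j \<le> n")
      case True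
      then show ?thesis using D_empty by blast
    next
      case False
      then have "j \<notin> Poly_Mapping.keys \<alpha>" "j \<notin> Poly_Mapping.keys \<beta>"
        using assms(1,2) by auto
      then show ?thesis by (simp add: not_in_keys_iff_lookup_eq_zero)
    qed
    then show False
      using assms(3) by (simp add: poly_mapping_eqI)
  qed
  moreover have fin: "finite ?D"
    by simp
  ultimately have j: "Max ?D \<in> ?D"
    by (rule Max_in[rotated])
  have above: "Poly_Mapping.lookup \<alpha> i = Poly_Mapping.lookup \<beta> i" if "Max ?D < i" "i \<le> n" for i
  proof (rule ccontr)
    assume "Poly_Mapping.lookup \<alpha> i \<noteq> Poly_Mapping.lookup \<beta> i"
    then have "i \<le> Max ?D"
      using that(2) fin by (simp add: Max_ge)
    then show False
      using that(1) by simp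
  qed
  show ?thesis
  proof (cases "Poly_Mapping.lookup \<alpha> (Max ?D) < Poly_Mapping.lookup \<beta> (Max ?D)")
    case True
    then have "revlex_gt n \<alpha> \<beta>"
      unfolding revlex_gt_def using j above by blast
    then show ?thesis ..
  next
    case False
    then have "Poly_Mapping.lookup \<beta> (Max ?D) < Poly_Mapping.lookup \<alpha> (Max ?D)"
      using j by simp
    then have "revlex_gt n \<beta> \<alpha>"
      unfolding revlex_gt_def using j above by (metis (no_types, lifting) mem_Collect_eq)
    then show ?thesis ..
  qed
qed

lemma revlex_gt_add_right [simp]: "revlex_gt n (\<alpha> + \<gamma>) (\<beta> + \<gamma>) \<longleftrightarrow> revlex_gt n \<alpha> \<beta>"
  by (simp add: revlex_gt_def lookup_add)

lemma revlex_gt_if_lookup_less: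
  "Poly_Mapping.lookup \<alpha> n < Poly_Mapping.lookup \<beta> n \<Longrightarrow> revlex_gt n \<alpha> \<beta>"
  unfolding revlex_gt_def by auto

lemma lookup_le_if_revlex_gt:
  "revlex_gt n \<alpha> \<beta> \<Longrightarrow> Poly_Mapping.lookup \<alpha> n \<le> Poly_Mapping.lookup \<beta> n"
  using revlex_gt_asym revlex_gt_if_lookup_less not_le by blast

definition closed_under_revlex_gt :: "nat \<Rightarrow> nat \<Rightarrow> (nat \<Rightarrow>\<^sub>0 nat) set \<Rightarrow> bool" where
  "closed_under_revlex_gt n t M \<longleftrightarrow>
     M \<subseteq> deg_monos n t \<and> (\<forall>\<alpha>\<in>M. \<forall>\<beta>\<in>deg_monos n t. revlex_gt n \<beta> \<alpha> \<longrightarrow> \<beta> \<in> M)"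

lemma rl_initial_segment_iff_closed_under_revlex_gt:
  "rl_initial_segment n t M \<longleftrightarrow> closed_under_revlex_gt n t M"
proof
  let ?above = "\<lambda>\<alpha>. {\<beta> \<in> deg_monos n t. revlex_gt n \<beta> \<alpha>}"
  assume "rl_initial_segment n t M"
  then obtain l where M_eq: "M = {\<alpha> \<in> deg_monos n t. card (?above \<alpha>) < l}"
    unfolding rl_initial_segment_def by blast
  have "card (?above \<beta>) < card (?above \<alpha>)" if "revlex_gt n \<beta> \<alpha>" "\<beta> \<in> deg_monos n t" for \<alpha> \<beta>
    by (rule psubset_card_mono) (simp, use that revlex_gt_trans[of n _ \<beta> \<alpha>] revlex_gt_irrefl[of n \<beta>] in blast)
  then show "closed_under_revlex_gt n t M"
    unfolding closed_under_revlex_gt_def M_eq by (auto dest: less_trans)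
next
  let ?above = "\<lambda>\<alpha>. {\<beta> \<in> deg_monos n t. revlex_gt n \<beta> \<alpha>}"
  assume "closed_under_revlex_gt n t M"
  then have M_sub: "M \<subseteq> deg_monos n t" and closed: "\<And>\<alpha> \<beta>. \<alpha> \<in> M \<Longrightarrow> \<beta> \<in> deg_monos n t \<Longrightarrow> revlex_gt n \<beta> \<alpha> \<Longrightarrow> \<beta> \<in> M"
    unfolding closed_under_revlex_gt_def by blast+
  have "\<alpha> \<in> M \<longleftrightarrow> card (?above \<alpha>) < card M" if \<alpha>: "\<alpha> \<in> deg_monos n t" for \<alpha>
  proof
    assume "\<alpha> \<in> M"
    then have "?above \<alpha> \<subset> M"
      using closed revlex_gt_irrefl by blast
    then show "card (?above \<alpha>) < card M"
      using M_sub by (meson finite_deg_monos finite_subset psubset_card_mono)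
  next
    assume card_less: "card (?above \<alpha>) < card M"
    show "\<alpha> \<in> M"
    proof (rule ccontr)
      assume "\<alpha> \<notin> M"
      have "M \<subseteq> ?above \<alpha>"
      proof
        fix \<beta> assume \<beta>: "\<beta> \<in> M"
        then have "\<beta> \<in> deg_monos n t" "\<beta> \<noteq> \<alpha>" "\<not> revlex_gt n \<alpha> \<beta>"
          using M_sub closed \<alpha> \<open>\<alpha> \<notin> M\<close> by blast+
        then show "\<beta> \<in> ?above \<alpha>"
          using revlex_gt_total[of \<beta> n \<alpha>] \<alpha> by (auto simp: deg_monos_iff)
      qed
      then show False
        using card_less card_mono[of "?above \<alpha>" M] by simp
    qed
  qed
  then show "rl_initial_segment n t M"
    unfolding rl_initial_segment_def using M_sub by blast
qed

lemma monomial_space_is_segment_iff: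
  "(\<exists>M. rl_initial_segment n t M \<and> (monomial_space A :: 'a::field mpoly set) = kspan (xmon ` M))
     \<longleftrightarrow> closed_under_revlex_gt n t A"
  by (simp add: span_xmon monomial_space_eq_iff rl_initial_segment_iff_closed_under_revlex_gt)

section \<open>Initial revlex segments and their shadows\<close>

locale revlex_segment =
  fixes n m :: nat and M :: "(nat \<Rightarrow>\<^sub>0 nat) set"
  assumes n_pos: "1 \<le> n" and closed: "closed_under_revlex_gt n m M" and nonempty: "M \<noteq> {}"
begin

abbreviation corner :: "nat \<Rightarrow>\<^sub>0 nat" where
  "corner \<equiv> Poly_Mapping.single (n - 1) m"

abbreviation shadow :: "nat \<Rightarrow> (nat \<Rightarrow>\<^sub>0 nat) set" where
  "shadow l \<equiv> deg_monos n l + M"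

lemma segment_subset: "M \<subseteq> deg_monos n m"
  using closed unfolding closed_under_revlex_gt_def by blast

lemma segment_closed: "\<alpha> \<in> M \<Longrightarrow> \<beta> \<in> deg_monos n m \<Longrightarrow> revlex_gt n \<beta> \<alpha> \<Longrightarrow> \<beta> \<in> M"
  using closed unfolding closed_under_revlex_gt_def by blast

lemma finite_segment: "finite M"
  using segment_subset finite_deg_monos finite_subset by blast

lemma corner_in_deg_monos: "corner \<in> deg_monos n m"
  using n_pos by simp

lemma revlex_gt_corner_iff:
  assumes "\<alpha> \<in> deg_monos n m"
  shows "revlex_gt n \<alpha> corner \<longleftrightarrow> Poly_Mapping.lookup \<alpha> n = 0 \<and> \<alpha> \<noteq> corner"
proof
  assume gt: "revlex_gt n \<alpha> corner"
  then obtain j where "Poly_Mapping.lookup \<alpha> j < Poly_Mapping.lookup corner j"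
    and above: "\<And>i. j < i \<Longrightarrow> i \<le> n \<Longrightarrow> Poly_Mapping.lookup \<alpha> i = Poly_Mapping.lookup corner i"
    unfolding revlex_gt_def by blast
  then have "j = n - 1"
    by (auto simp: lookup_single when_def split: if_splits)
  then have "Poly_Mapping.lookup \<alpha> n = 0"
    using above[of n] n_pos by (simp add: lookup_single)
  then show "Poly_Mapping.lookup \<alpha> n = 0 \<and> \<alpha> \<noteq> corner"
    using gt revlex_gt_irrefl by blast
next
  assume "Poly_Mapping.lookup \<alpha> n = 0 \<and> \<alpha> \<noteq> corner"
  moreover have "mdeg \<alpha> = m"
    using assms by (simp add: deg_monos_iff)
  ultimately have "Poly_Mapping.lookup \<alpha> (n - 1) < m"
    using lookup_le_mdeg[of \<alpha> "n - 1"] eq_single_if_lookup_eq_mdeg[of \<alpha> "n - 1"] by fastforce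
  moreover have "Poly_Mapping.lookup \<alpha> i = Poly_Mapping.lookup corner i" if "n - 1 < i" "i \<le> n" for i
  proof -
    have "i = n"
      using that by linarith
    then show ?thesis
      using \<open>Poly_Mapping.lookup \<alpha> n = 0 \<and> \<alpha> \<noteq> corner\<close> n_pos by (simp add: lookup_single when_def)
  qed
  ultimately show "revlex_gt n \<alpha> corner"
    unfolding revlex_gt_def by (intro exI[of _ "n - 1"]) simp
qed

lemma mem_segment_if_corner_mem:
  "corner \<in> M \<Longrightarrow> \<alpha> \<in> deg_monos n m \<Longrightarrow> Poly_Mapping.lookup \<alpha> n = 0 \<Longrightarrow> \<alpha> \<in> M"
  using segment_closed revlex_gt_corner_iff by blast

lemma corner_mem_iff_card: "corner \<in> M \<longleftrightarrow> (n + m - 1) choose m \<le> card M"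
proof -
  let ?F = "deg_monos (n - 1) m"
  have card_F: "card ?F = (n + m - 1) choose m"
    using n_pos by (simp add: card_deg_monos)
  have F_eq: "?F = {\<alpha> \<in> deg_monos n m. Poly_Mapping.lookup \<alpha> n = 0}"
    using n_pos by (rule deg_monos_pred)
  show ?thesis
  proof
    assume "corner \<in> M"
    then have "?F \<subseteq> M"
      using F_eq mem_segment_if_corner_mem by blast
    then show "(n + m - 1) choose m \<le> card M"
      using card_F card_mono[OF finite_segment, of ?F] by simp
  next
    assume card_ge: "(n + m - 1) choose m \<le> card M"
    show "corner \<in> M"
    proof (rule ccontr)
      assume "corner \<notin> M"
      have "M \<subseteq> ?F - {corner}"
      proof
        fix \<alpha> assume "\<alpha> \<in> M"
        then have \<alpha>: "\<alpha> \<in> deg_monos n m" "\<alpha> \<noteq> corner" "\<not> revlex_gt n corner \<alpha>"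
          using segment_subset segment_closed corner_in_deg_monos \<open>corner \<notin> M\<close> by blast+
        then have "revlex_gt n \<alpha> corner"
          using revlex_gt_total[of \<alpha> n corner] corner_in_deg_monos by (auto simp: deg_monos_iff)
        then show "\<alpha> \<in> ?F - {corner}"
          using F_eq revlex_gt_corner_iff \<alpha>(1) by blast
      qed
      then have "card M \<le> card (?F - {corner})"
        by (intro card_mono) simp_all
      also have "\<dots> < card ?F"
        using F_eq corner_in_deg_monos n_pos by (intro card_Diff1_less) (auto simp: lookup_single)
      finally show False
        using card_ge card_F by simp
    qed
  qed
qed

lemma shadow_subset: "shadow l \<subseteq> deg_monos n (m + l)"
  using set_plus_subset_deg_monos[OF order_refl segment_subset] by (simp add: add.commute)

lemma finite_shadow: "finite (shadow l)"
  using shadow_subset finite_deg_monos finite_subset by blast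

text \<open>Any factorisation \<open>\<gamma> x\<^sub>n\<^sup>l = \<delta> \<alpha>\<close> with \<open>\<delta> \<noteq> x\<^sub>n\<^sup>l\<close> has \<open>\<delta>\<close> revlex-above
  \<open>x\<^sub>n\<^sup>l\<close>, hence \<open>\<gamma>\<close> revlex-above \<open>\<alpha>\<close>.\<close>

lemma shift_mem_shadow_iff:
  assumes \<gamma>: "\<gamma> \<in> deg_monos n m"
  shows "\<gamma> + Poly_Mapping.single n l \<in> shadow l \<longleftrightarrow> \<gamma> \<in> M"
proof
  assume "\<gamma> + Poly_Mapping.single n l \<in> shadow l"
  then obtain \<delta> \<alpha> where eq: "\<gamma> + Poly_Mapping.single n l = \<delta> + \<alpha>"
    and \<delta>: "\<delta> \<in> deg_monos n l" and \<alpha>: "\<alpha> \<in> M"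
    by (auto elim: set_plus_elim)
  show "\<gamma> \<in> M"
  proof (cases "\<delta> = Poly_Mapping.single n l")
    case True
    then show ?thesis
      using eq \<alpha> by (simp add: add.commute)
  next
    case False
    have "Poly_Mapping.lookup \<delta> n \<noteq> l"
      using False \<delta> eq_single_if_lookup_eq_mdeg[of \<delta> n] by (auto simp: deg_monos_iff)
    then have "Poly_Mapping.lookup \<delta> n < l"
      using lookup_le_mdeg[of \<delta> n] \<delta> by (simp add: deg_monos_iff)
    then have "revlex_gt n (\<delta> + \<alpha>) (Poly_Mapping.single n l + \<alpha>)"
      by (simp add: revlex_gt_if_lookup_less)
    then have "revlex_gt n \<gamma> \<alpha>"
      by (metis eq add.commute revlex_gt_add_right)
    then show ?thesis
      using segment_closed \<alpha> \<gamma> by blast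
  qed
next
  assume "\<gamma> \<in> M"
  then show "\<gamma> + Poly_Mapping.single n l \<in> shadow l"
    by (metis add.commute set_plus_intro single_in_deg_monos order_refl)
qed

lemma low_mem_shadow:
  assumes corner: "corner \<in> M" and \<beta>: "\<beta> \<in> deg_monos n (m + l)" and low: "Poly_Mapping.lookup \<beta> n \<le> l"
  shows "\<beta> \<in> shadow l"
proof -
  define b where "b = Poly_Mapping.lookup \<beta> n"
  define \<beta>\<^sub>0 where "\<beta>\<^sub>0 = \<beta> - Poly_Mapping.single n b"
  have \<beta>_eq: "\<beta> = \<beta>\<^sub>0 + Poly_Mapping.single n b"
    unfolding \<beta>\<^sub>0_def b_def by (rule add_single_minus) simp
  have "m + l - b + b = m + l"
    using low by (simp add: b_def)
  then have \<beta>\<^sub>0: "\<beta>\<^sub>0 \<in> deg_monos n (m + l - b)"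
    using \<beta> \<beta>_eq add_in_deg_monos_iff[of "Poly_Mapping.single n b" n b \<beta>\<^sub>0 "m + l - b"] by simp
  moreover have "m \<le> m + l - b"
    using low by (simp add: b_def)
  ultimately obtain \<alpha> \<rho> where \<beta>\<^sub>0_eq: "\<beta>\<^sub>0 = \<alpha> + \<rho>" and "mdeg \<alpha> = m"
    using mdeg_split[of m \<beta>\<^sub>0] by (auto simp: deg_monos_iff)
  then have "\<alpha> \<in> deg_monos n m" and \<rho>: "\<rho> \<in> deg_monos n (l - b)"
    using \<beta>\<^sub>0 by (auto simp: deg_monos_iff keys_add_nat mdeg_add)
  moreover have "Poly_Mapping.lookup \<alpha> n = 0"
  proof -
    have "Poly_Mapping.lookup \<beta>\<^sub>0 n = 0"
      by (simp add: \<beta>\<^sub>0_def b_def lookup_minus)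
    then show ?thesis
      using \<beta>\<^sub>0_eq by (simp add: lookup_add)
  qed
  ultimately have "\<alpha> \<in> M"
    using corner mem_segment_if_corner_mem by blast
  moreover have "\<rho> + Poly_Mapping.single n b \<in> deg_monos n l"
    using add_in_deg_monos[OF \<rho>, of "Poly_Mapping.single n b" b] low by (simp add: b_def)
  ultimately have "(\<rho> + Poly_Mapping.single n b) + \<alpha> \<in> shadow l"
    by (rule set_plus_intro[rotated])
  then show ?thesis
    using \<beta>_eq \<beta>\<^sub>0_eq by (simp add: ac_simps)
qed

lemma shadow_complement:
  assumes corner: "corner \<in> M"
  shows "deg_monos n (m + l) - (shadow l)
           = (\<lambda>\<gamma>. \<gamma> + Poly_Mapping.single n l) ` (deg_monos n m - M)"
proof (intro set_eqI iffI)
  fix \<beta> assume \<beta>: "\<beta> \<in> deg_monos n (m + l) - (shadow l)"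
  then have "l \<le> Poly_Mapping.lookup \<beta> n"
    using low_mem_shadow[OF corner] by fastforce
  then have \<beta>_eq: "\<beta> = (\<beta> - Poly_Mapping.single n l) + Poly_Mapping.single n l"
    by (rule add_single_minus)
  then have "\<beta> - Poly_Mapping.single n l \<in> deg_monos n m"
    using \<beta> add_in_deg_monos_iff[of _ n l _ m] by (metis Diff_iff add.commute single_in_deg_monos order_refl)
  then show "\<beta> \<in> (\<lambda>\<gamma>. \<gamma> + Poly_Mapping.single n l) ` (deg_monos n m - M)"
    using \<beta> \<beta>_eq shift_mem_shadow_iff by (metis Diff_iff image_eqI)
next
  fix \<beta> assume "\<beta> \<in> (\<lambda>\<gamma>. \<gamma> + Poly_Mapping.single n l) ` (deg_monos n m - M)"
  then obtain \<gamma> where "\<gamma> \<in> deg_monos n m" "\<gamma> \<notin> M" "\<beta> = \<gamma> + Poly_Mapping.single n l"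
    by blast
  then show "\<beta> \<in> deg_monos n (m + l) - (shadow l)"
    using shift_mem_shadow_iff add_in_deg_monos by fastforce
qed

lemma shadow_closed_under_revlex_gt:
  assumes corner: "corner \<in> M"
  shows "closed_under_revlex_gt n (m + l) (shadow l)"
  unfolding closed_under_revlex_gt_def
proof (intro conjI ballI impI shadow_subset)
  fix \<gamma> \<beta> assume \<gamma>: "\<gamma> \<in> shadow l" and \<beta>: "\<beta> \<in> deg_monos n (m + l)"
    and gt: "revlex_gt n \<beta> \<gamma>"
  show "\<beta> \<in> shadow l"
  proof (rule ccontr)
    assume "\<beta> \<notin> shadow l"
    then obtain \<beta>' where \<beta>': "\<beta>' \<in> deg_monos n m" "\<beta>' \<notin> M" and \<beta>_eq: "\<beta> = \<beta>' + Poly_Mapping.single n l"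
      using \<beta> shadow_complement[OF corner, of l] by blast
    have "l \<le> Poly_Mapping.lookup \<gamma> n"
      using lookup_le_if_revlex_gt[OF gt] \<beta>_eq by (simp add: lookup_add)
    then have \<gamma>_eq: "\<gamma> = (\<gamma> - Poly_Mapping.single n l) + Poly_Mapping.single n l"
      by (rule add_single_minus)
    moreover have "\<gamma> \<in> deg_monos n (m + l)"
      using \<gamma> shadow_subset by blast
    ultimately have \<gamma>': "\<gamma> - Poly_Mapping.single n l \<in> deg_monos n m"
      using add_in_deg_monos_iff[of _ n l _ m] by (metis add.commute single_in_deg_monos order_refl)
    then have "\<gamma> - Poly_Mapping.single n l \<in> M"
      using \<gamma> \<gamma>_eq shift_mem_shadow_iff by metis
    moreover have "revlex_gt n \<beta>' (\<gamma> - Poly_Mapping.single n l)"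
      using gt \<beta>_eq \<gamma>_eq by (metis revlex_gt_add_right)
    ultimately show False
      using \<beta>' segment_closed by blast
  qed
qed

lemma corner_mem_if_shadow_closed_under_revlex_gt:
  assumes "0 < l" and closed_shadow: "closed_under_revlex_gt n (m + l) (shadow l)"
  shows "corner \<in> M"
proof -
  obtain \<alpha> where \<alpha>: "\<alpha> \<in> M"
    using nonempty by blast
  let ?\<beta> = "Poly_Mapping.single (n - 1) (m + l) :: nat \<Rightarrow>\<^sub>0 nat"
  have "Poly_Mapping.single n l + \<alpha> \<in> shadow l"
    using \<alpha> by (simp add: set_plus_intro)
  moreover have "revlex_gt n ?\<beta> (Poly_Mapping.single n l + \<alpha>)"
    using n_pos \<open>0 < l\<close> by (intro revlex_gt_if_lookup_less) (simp add: lookup_add lookup_single)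
  ultimately have "?\<beta> \<in> shadow l"
    using closed_shadow n_pos unfolding closed_under_revlex_gt_def by simp
  then obtain \<delta> \<alpha>' where \<beta>_eq: "?\<beta> = \<delta> + \<alpha>'" and \<alpha>': "\<alpha>' \<in> M"
    by (auto elim: set_plus_elim)
  have "Poly_Mapping.keys \<alpha>' \<subseteq> Poly_Mapping.keys (\<delta> + \<alpha>')"
    by (simp add: keys_add_nat)
  also have "\<dots> = {n - 1}"
    using \<open>0 < l\<close> by (simp flip: \<beta>_eq)
  finally have "Poly_Mapping.keys \<alpha>' \<subseteq> {n - 1}" .
  then have "\<alpha>' = corner"
    using \<alpha>' segment_subset eq_single_if_keys_subset by (fastforce simp: deg_monos_iff)
  then show ?thesis
    using \<alpha>' by simp
qed

lemma codim_shadow: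
  assumes "corner \<in> M"
  shows "int (card (deg_monos n m)) - int (card M)
           = int (card (deg_monos n (m + l))) - int (card (shadow l))"
proof -
  have "card (deg_monos n (m + l) - (shadow l)) = card (deg_monos n m - M)"
    unfolding shadow_complement[OF assms] by (rule card_image) (simp add: inj_on_def)
  moreover have "card (deg_monos n (m + l) - (shadow l))
      = card (deg_monos n (m + l)) - card (shadow l)"
    using finite_shadow shadow_subset by (rule card_Diff_subset)
  moreover have "card (deg_monos n m - M) = card (deg_monos n m) - card M"
    using finite_segment segment_subset by (rule card_Diff_subset)
  moreover have "card (shadow l) \<le> card (deg_monos n (m + l))" "card M \<le> card (deg_monos n m)"
    using shadow_subset segment_subset by (simp_all add: card_mono)
  ultimately show ?thesis
    by linarith
qed

end

section \<open>Components of an ideal generated in low degrees\<close>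

lemma lookup_hcomp:
  "Poly_Mapping.lookup (hcomp t f) \<gamma> = (if mdeg \<gamma> = t then Poly_Mapping.lookup f \<gamma> else 0)"
  unfolding hcomp_def by (auto simp: lookup_sum lookup_single when_def in_keys_iff)

lemma keys_hcomp: "Poly_Mapping.keys (hcomp t f) = {\<gamma> \<in> Poly_Mapping.keys f. mdeg \<gamma> = t}"
  by (auto simp: in_keys_iff lookup_hcomp split: if_splits)

lemma lookup_xmon_mult:
  "Poly_Mapping.lookup ((xmon \<mu> :: 'a::field mpoly) * p) (\<mu> + \<gamma>) = Poly_Mapping.lookup p \<gamma>"
proof -
  have "(xmon \<mu> :: 'a mpoly) * p
      = (\<Sum>\<beta>\<in>Poly_Mapping.keys p. Poly_Mapping.single (\<mu> + \<beta>) (Poly_Mapping.lookup p \<beta>))"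
    by (subst mpoly_eq_sum_xmon[of p])
       (simp add: sum_distrib_left smult_mp_eq_mult xmon_def mult_single ac_simps)
  then show ?thesis
    by (simp add: lookup_sum lookup_single when_def in_keys_iff)
qed

lemma xmon_in_ringS: "Poly_Mapping.keys \<mu> \<subseteq> {0..n} \<Longrightarrow> (xmon \<mu> :: 'a::field mpoly) \<in> ringS n"
  by (simp add: ringS_eq)

lemma homog_subset_ringS: "homog n t \<subseteq> (ringS n :: 'a::field mpoly set)"
proof -
  have "deg_monos n t \<subseteq> {\<alpha>. Poly_Mapping.keys \<alpha> \<subseteq> {0..n}}"
    using deg_monos_iff by blast
  then show ?thesis
    unfolding homog_eq ringS_eq by blast
qed

lemma subspace_ideal: "is_ideal n J \<Longrightarrow> mp.subspace (J :: 'a::field mpoly set)"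
  unfolding mp.subspace_def is_ideal_def
proof (intro conjI ballI allI)
  fix c :: 'a and f
  assume "J \<subseteq> ringS n \<and> 0 \<in> J \<and> (\<forall>f\<in>J. \<forall>g\<in>J. f + g \<in> J) \<and> (\<forall>s\<in>ringS n. \<forall>f\<in>J. s * f \<in> J)" "f \<in> J"
  moreover have "Poly_Mapping.single 0 c \<in> (ringS n :: 'a mpoly set)"
    by (simp add: ringS_eq)
  ultimately show "smult_mp c f \<in> J"
    by (simp add: smult_mp_eq_mult)
qed auto

lemma prodspace_subset_ideal:
  "is_ideal n J \<Longrightarrow> A \<subseteq> ringS n \<Longrightarrow> B \<subseteq> J \<Longrightarrow> prodspace A B \<subseteq> (J :: 'a::field mpoly set)"
  unfolding prodspace_def by (rule mp.span_minimal[OF _ subspace_ideal]) (unfold is_ideal_def, blast+)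

text \<open>The monomial \<open>x\<^sup>\<mu> x\<^sup>\<gamma>\<close> occurs in \<open>x\<^sup>\<mu>\<close> times the homogeneous component of \<open>f\<close>
  of the degree of \<open>x\<^sup>\<gamma>\<close>, an element of \<open>J\<^sub>m\<close>.\<close>

lemma homogeneous_ideal_lift_support:
  fixes J :: "'a::field mpoly set"
  assumes hom: "homogeneous_ideal n J" and comp: "J \<inter> homog n m = monomial_space M"
    and f: "f \<in> J" and \<gamma>: "\<gamma> \<in> Poly_Mapping.keys f"
    and \<mu>: "Poly_Mapping.keys \<mu> \<subseteq> {0..n}" and deg: "mdeg (\<mu> + \<gamma>) = m"
  shows "\<mu> + \<gamma> \<in> M"
proof -
  let ?q = "xmon \<mu> * hcomp (mdeg \<gamma>) f :: 'a mpoly"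
  have ideal: "is_ideal n J"
    using hom unfolding homogeneous_ideal_def by blast
  then have "?q \<in> J"
    using hom f \<mu> unfolding homogeneous_ideal_def is_ideal_def by (simp add: xmon_in_ringS)
  moreover have "Poly_Mapping.keys ?q \<subseteq> deg_monos n m"
  proof
    fix \<beta> assume "\<beta> \<in> Poly_Mapping.keys ?q"
    then obtain \<gamma>' where "\<beta> = \<mu> + \<gamma>'" "\<gamma>' \<in> Poly_Mapping.keys f" "mdeg \<gamma>' = mdeg \<gamma>"
      using keys_mult[of "xmon \<mu>" "hcomp (mdeg \<gamma>) f"] by (auto simp: keys_hcomp)
    moreover have "Poly_Mapping.keys \<gamma>' \<subseteq> {0..n}"
      using ideal f \<open>\<gamma>' \<in> Poly_Mapping.keys f\<close> unfolding is_ideal_def by (auto simp: ringS_eq)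
    ultimately show "\<beta> \<in> deg_monos n m"
      using \<mu> deg by (simp add: deg_monos_iff keys_add_nat mdeg_add)
  qed
  ultimately have "Poly_Mapping.keys ?q \<subseteq> M"
    using comp by (auto simp: homog_eq)
  moreover have "Poly_Mapping.lookup ?q (\<mu> + \<gamma>) \<noteq> 0"
    using \<gamma> by (simp add: lookup_xmon_mult lookup_hcomp in_keys_iff)
  ultimately show ?thesis
    by (auto simp: in_keys_iff)
qed

text \<open>\<open>M + UNIV\<close> is the set of multiples of elements of \<open>M\<close>. The elements of \<open>J\<close> whose
  monomials of degree \<open>\<ge> m\<close> all lie in it form an ideal containing the generators of \<open>J\<close>.\<close>

lemma generated_ideal_support:
  fixes J :: "'a::field mpoly set"
  assumes hom: "homogeneous_ideal n J" and gen: "generated_in_degrees_le n m J"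
    and comp: "J \<inter> homog n m = monomial_space M"
    and f: "f \<in> J" and \<beta>: "\<beta> \<in> Poly_Mapping.keys f" "m \<le> mdeg \<beta>"
  shows "\<beta> \<in> M + UNIV"
proof -
  define K where "K = {g \<in> J. \<forall>\<beta>\<in>Poly_Mapping.keys g. m \<le> mdeg \<beta> \<longrightarrow> \<beta> \<in> M + UNIV}"
  have ideal: "is_ideal n J"
    using hom unfolding homogeneous_ideal_def by blast
  have "s * g \<in> K" if s: "s \<in> ringS n" and g: "g \<in> K" for s g
  proof -
    have "\<beta> \<in> M + UNIV" if \<beta>: "\<beta> \<in> Poly_Mapping.keys (s * g)" "m \<le> mdeg \<beta>" for \<beta>
    proof -
      obtain \<mu> \<gamma> where \<beta>_eq: "\<beta> = \<mu> + \<gamma>" and \<mu>: "\<mu> \<in> Poly_Mapping.keys s"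
        and \<gamma>: "\<gamma> \<in> Poly_Mapping.keys g"
        using \<beta> keys_mult by blast
      show ?thesis
      proof (cases "m \<le> mdeg \<gamma>")
        case True
        then obtain \<alpha> \<rho> where "\<alpha> \<in> M" "\<gamma> = \<alpha> + \<rho>"
          using g \<gamma> unfolding K_def by (blast elim: set_plus_elim)
        moreover from this have "\<beta> = \<alpha> + (\<rho> + \<mu>)"
          using \<beta>_eq by (simp add: ac_simps)
        ultimately show ?thesis
          by blast
      next
        case False
        have "m - mdeg \<gamma> \<le> mdeg \<mu>"
          using \<beta> \<beta>_eq by (simp add: mdeg_add)
        then obtain \<mu>' \<rho> where \<mu>_eq: "\<mu> = \<mu>' + \<rho>" and deg: "mdeg \<mu>' = m - mdeg \<gamma>"
          using mdeg_split by blast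
        have "Poly_Mapping.keys \<mu>' \<subseteq> Poly_Mapping.keys \<mu>"
          using \<mu>_eq by (simp add: keys_add_nat)
        moreover have "Poly_Mapping.keys \<mu> \<subseteq> {0..n}"
          using s \<mu> unfolding ringS_eq by blast
        ultimately have "Poly_Mapping.keys \<mu>' \<subseteq> {0..n}"
          by blast
        moreover have "g \<in> J"
          using g by (simp add: K_def)
        ultimately have "\<mu>' + \<gamma> \<in> M"
          using homogeneous_ideal_lift_support[OF hom comp, of g \<gamma> \<mu>'] \<gamma> deg False
          by (simp add: mdeg_add)
        moreover have "\<beta> = (\<mu>' + \<gamma>) + \<rho>"
          using \<beta>_eq \<mu>_eq by (simp add: ac_simps)
        ultimately show ?thesis
          by blast
      qed
    qed
    moreover have "s * g \<in> J"
      using ideal s g unfolding K_def is_ideal_def by simp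
    ultimately show ?thesis
      unfolding K_def by blast
  qed
  moreover have "f + g \<in> K" if "f \<in> K" "g \<in> K" for f g
  proof -
    have "f + g \<in> J"
      using ideal that unfolding K_def is_ideal_def by simp
    moreover have "Poly_Mapping.keys (f + g) \<subseteq> Poly_Mapping.keys f \<union> Poly_Mapping.keys g"
      by (rule keys_add)
    ultimately show ?thesis
      using that unfolding K_def by blast
  qed
  moreover have "K \<subseteq> ringS n" "0 \<in> K"
    using ideal unfolding K_def is_ideal_def by auto
  ultimately have "is_ideal n K"
    unfolding is_ideal_def by blast
  moreover have "(\<Union>d\<le>m. J \<inter> homog n d) \<subseteq> K"
  proof
    fix g assume "g \<in> (\<Union>d\<le>m. J \<inter> homog n d)"
    then obtain d where "d \<le> m" "g \<in> J" "g \<in> homog n d"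
      by blast
    have "\<gamma> \<in> M" if \<gamma>: "\<gamma> \<in> Poly_Mapping.keys g" "m \<le> mdeg \<gamma>" for \<gamma>
    proof -
      have "\<gamma> \<in> deg_monos n d"
        using \<open>g \<in> homog n d\<close> \<gamma>(1) unfolding homog_eq by blast
      then have "g \<in> J \<inter> homog n m"
        using \<open>d \<le> m\<close> \<gamma>(2) \<open>g \<in> J\<close> \<open>g \<in> homog n d\<close> by (simp add: deg_monos_iff)
      then show ?thesis
        using comp \<gamma>(1) by blast
    qed
    moreover have "\<gamma> \<in> M + UNIV" if "\<gamma> \<in> M" for \<gamma>
      using set_plus_intro[OF that UNIV_I, of 0] by simp
    ultimately show "g \<in> K"
      using \<open>g \<in> J\<close> unfolding K_def by blast
  qed
  ultimately have "J \<subseteq> K"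
    using gen unfolding generated_in_degrees_le_def ideal_gen_def by blast
  then show ?thesis
    using f \<beta> unfolding K_def by blast
qed

lemma component_eq_shadow:
  fixes J :: "'a::field mpoly set"
  assumes hom: "homogeneous_ideal n J" and gen: "generated_in_degrees_le n m J"
    and comp: "J \<inter> homog n m = monomial_space M" and M: "M \<subseteq> deg_monos n m" and "m \<le> t"
  shows "J \<inter> homog n t = monomial_space (deg_monos n (t - m) + M)"
proof (intro equalityI subsetI)
  fix f assume f: "f \<in> J \<inter> homog n t"
  show "f \<in> monomial_space (deg_monos n (t - m) + M)"
  proof (intro CollectI subsetI)
    fix \<beta> assume \<beta>: "\<beta> \<in> Poly_Mapping.keys f"
    then have "\<beta> \<in> deg_monos n t"
      using f by (auto simp: homog_eq)
    moreover obtain \<alpha> \<rho> where "\<beta> = \<alpha> + \<rho>" "\<alpha> \<in> M"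
      using generated_ideal_support[OF hom gen comp, of f \<beta>] f \<beta> \<open>\<beta> \<in> deg_monos n t\<close> \<open>m \<le> t\<close>
      by (auto simp: deg_monos_iff elim: set_plus_elim)
    ultimately show "\<beta> \<in> deg_monos n (t - m) + M"
      using M \<open>m \<le> t\<close> add_in_deg_monos_iff[of \<alpha> n m \<rho> "t - m"]
      by (metis add.commute le_add_diff_inverse set_plus_intro subsetD)
  qed
next
  fix p :: "'a mpoly" assume p: "p \<in> monomial_space (deg_monos n (t - m) + M)"
  have "deg_monos n (t - m) + M \<subseteq> deg_monos n t"
    using set_plus_subset_deg_monos[OF order_refl M, of "t - m"] \<open>m \<le> t\<close> by simp
  then have "p \<in> homog n t"
    using p by (auto simp: homog_eq)
  moreover have "p \<in> prodspace (homog n (t - m)) (J \<inter> homog n m)"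
    using p by (simp add: homog_eq[of n "t - m"] comp prodspace_monomial_space)
  then have "p \<in> J"
    using prodspace_subset_ideal[OF _ homog_subset_ringS] hom
    unfolding homogeneous_ideal_def by blast
  ultimately show "p \<in> J \<inter> homog n t"
    by blast
qed

context revlex_segment
begin

lemma kdim_segment_space: "kdim (monomial_space M :: 'a::field mpoly set) = card M"
  using finite_segment by (rule dim_monomial_space)

lemma prodspace_segment_space:
  "prodspace (homog n l) (monomial_space M) = (monomial_space (shadow l) :: 'a::field mpoly set)"
  by (simp add: homog_eq prodspace_monomial_space)

lemma prodspace_is_segment_iff:
  assumes "0 < l"
  shows "(\<exists>M'. rl_initial_segment n (m + l) M'
            \<and> prodspace (homog n l) (monomial_space M) = (kspan (xmon ` M') :: 'a::field mpoly set))
         \<longleftrightarrow> corner \<in> M"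
  using assms shadow_closed_under_revlex_gt corner_mem_if_shadow_closed_under_revlex_gt
  by (auto simp: prodspace_segment_space monomial_space_is_segment_iff)

lemma codim_prodspace:
  assumes "corner \<in> M"
  shows "int (kdim (homog n m :: 'a::field mpoly set)) - int (kdim (monomial_space M :: 'a mpoly set))
     = int (kdim (homog n (m + l) :: 'a mpoly set))
       - int (kdim (prodspace (homog n l) (monomial_space M) :: 'a mpoly set))"
  using codim_shadow[OF assms, of l]
  unfolding prodspace_segment_space by (simp add: homog_eq dim_monomial_space finite_segment finite_shadow)

lemma hilbert_fn_eventually_const:
  fixes J :: "'a::field mpoly set"
  assumes "corner \<in> M" and hom: "homogeneous_ideal n J" and gen: "generated_in_degrees_le n m J"
    and comp: "J \<inter> homog n m = monomial_space M"
  shows "\<forall>\<^sub>F t in sequentially. hilbert_fn n J t = int (card (deg_monos n m)) - int (card M)"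
  unfolding eventually_sequentially
proof (intro exI allI impI)
  fix t assume "m \<le> t"
  then have "J \<inter> homog n t = monomial_space (shadow (t - m))"
    using component_eq_shadow[OF hom gen comp segment_subset] by blast
  then show "hilbert_fn n J t = int (card (deg_monos n m)) - int (card M)"
    using codim_shadow[OF \<open>corner \<in> M\<close>, of "t - m"] \<open>m \<le> t\<close>
    by (simp add: hilbert_fn_def homog_eq dim_monomial_space finite_shadow)
qed

end

theorem mainTheorem12:
  fixes n m :: nat and I :: "'a::field_char_0 mpoly set"
  assumes alg_closed: "\<forall>p :: 'a poly. Polynomial.degree p > 0 \<longrightarrow> (\<exists>x. poly p x = 0)"
    and n1: "n \<ge> 1" and m1: "m \<ge> 1"
    and seg: "\<exists>M. rl_initial_segment n m M \<and> I = kspan (xmon ` M)"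
    and nonzero: "I \<noteq> {0}"
  shows "(\<forall>l>0.
            ((\<exists>M'. rl_initial_segment n (m + l) M' \<and>
                   prodspace (homog n l) I = kspan (xmon ` M'))
               \<longleftrightarrow> kdim I \<ge> (n + m - 1) choose m)
          \<and> (kdim I \<ge> (n + m - 1) choose m
               \<longleftrightarrow> xmon (Poly_Mapping.single (n - 1) m) \<in> I))
       \<and> (xmon (Poly_Mapping.single (n - 1) m) \<in> I \<longrightarrow>
            (\<forall>l. int (kdim (homog n m :: 'a mpoly set)) - int (kdim I)
                 = int (kdim (homog n (m + l) :: 'a mpoly set)) - int (kdim (prodspace (homog n l) I)))
          \<and> (\<forall>J :: 'a mpoly set. homogeneous_ideal n J \<and> generated_in_degrees_le n m J
                 \<and> J \<inter> homog n m = I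
               \<longrightarrow> (\<exists>c. \<forall>\<^sub>F t in sequentially. hilbert_fn n J t = c)))"
proof -
  obtain M where "rl_initial_segment n m M" and I_eq: "I = monomial_space M"
    using seg by (auto simp: span_xmon)
  moreover have "M \<noteq> {}"
    using nonzero I_eq by auto
  ultimately interpret revlex_segment n m M
    using n1 by unfold_locales (simp_all add: rl_initial_segment_iff_closed_under_revlex_gt)
  have corner_iff: "xmon corner \<in> I \<longleftrightarrow> corner \<in> M"
    using I_eq by simp
  have card_iff: "(n + m - 1) choose m \<le> kdim I \<longleftrightarrow> corner \<in> M"
    by (simp only: I_eq kdim_segment_space corner_mem_iff_card)
  show ?thesis
    unfolding corner_iff card_iff
    using prodspace_is_segment_iff codim_prodspace hilbert_fn_eventually_const
    by (auto simp: I_eq) blast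
qed

end
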